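(* With the notation of the context, for every $\alpha\in\mathbb{R}$ the set $$\varphi(\ell_\alpha)\cap M=\left\{\left(x_j^*,\ \alpha+\frac{\lambda x_j}{d}\bmod\frac1d\right):\ j\in\mathbb{Z}\right\}$$ is a dense subset of $$L_\alpha:=\left\{\left(\xi,\ \alpha-\frac{\lambda^*}{d}\xi\bmod\frac1d\right):\ 0\le\xi<\cos\theta+\sin\theta\right\}\subset M.$$
   Context: Let $0<\theta<\pi/2$ with $\tan\theta$ irrational, $\epsilon=\cos\theta+\sin\theta$, $\Lambda_F=\{m\cos\theta-n\sin\theta:\ m,n\in\mathbb{Z},\ 0\le m\sin\theta+n\cos\theta<\epsilon\}$, $\Lambda=\Lambda_F\times\mathbb{Z}$. For $x=m\cos\theta-n\sin\theta$ ($m,n\in\mathbb{Z}$) put $x^*=m\sin\theta+n\cos\theta$. Enumerate $\Lambda_F=\{x_j\}_{j\in\mathbb{Z}}$ increasingly with $x_0=0$. Let $a,b,d\in\mathbb{Z}$ be relatively prime (gcd$(a,b,d)=1$) with $d>0$, $\lambda=a\cos\theta-b\sin\theta$, $\lambda^*=a\sin\theta+b\cos\theta$. Let $X$ be the quotient of $[0,\cos\theta)\times[0,1/d]\times[0,\cos\theta]\cup[\cos\theta,\cos\theta+\sin\theta)\times[0,1/d]\times[0,\sin\theta]$ by $(\xi,0,\zeta)\sim(\xi,1/d,\zeta)$, $(\xi,\eta,\cos\theta)\sim(\xi+\sin\theta,\eta,0)$ for $0\le\xi<\cos\theta$, and $(\xi,\eta,\sin\theta)\sim(\xi-\cos\theta,\eta,0)$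 for $\cos\theta\le\xi<\cos\theta+\sin\theta$. Define $\varphi:\mathbb{R}^2\to X$ by $\varphi(x,y)=(x_j^*,\ y\bmod\frac1d,\ x-x_j)$ for $x_j\le x<x_{j+1}$. Let $M=[0,\cos\theta+\sin\theta)\times[0,1/d]$ with $(\xi,0)\sim(\xi,1/d)$ (i.e. second coordinate taken in $\mathbb{R}/\frac1d\mathbb{Z}$), identified with $M\times\{0\}\subset X$. For $\alpha\in\mathbb{R}$, $\ell_\alpha=\{(t,\alpha+t\lambda/d):\ t\in\mathbb{R}\}$. *)

theory Defs
  imports "HOL-Analysis.Analysis"
begin

definition rmod :: "real \<Rightarrow> real \<Rightarrow> real" where
  "rmod y c = y - c * of_int \<lfloor>y / c\<rfloor>"

definition LamF :: "real \<Rightarrow> real set" where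
  "LamF \<theta> = {of_int m * cos \<theta> - of_int n * sin \<theta> | m n :: int.
      0 \<le> of_int m * sin \<theta> + of_int n * cos \<theta> \<and>
      of_int m * sin \<theta> + of_int n * cos \<theta> < cos \<theta> + sin \<theta>}"

text \<open>The star map x = m cos - n sin  \<mapsto>  x* = m sin + n cos
  (well defined since tan theta is irrational).\<close>
definition star :: "real \<Rightarrow> real \<Rightarrow> real" where
  "star \<theta> x = (THE s. \<exists>m n :: int. x = of_int m * cos \<theta> - of_int n * sin \<theta> \<and>
                                  s = of_int m * sin \<theta> + of_int n * cos \<theta>)"

text \<open>The box whose quotient is X.\<close>
definition Xbox :: "real \<Rightarrow> int \<Rightarrow> real \<times> real \<times> real \<Rightarrow> bool" where
  "Xbox \<theta> d p = (case p of (\<xi>, \<eta>, \<zeta>) \<Rightarrow>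
      (0 \<le> \<xi> \<and> \<xi> < cos \<theta> \<and> 0 \<le> \<eta> \<and> \<eta> \<le> 1 / of_int d \<and> 0 \<le> \<zeta> \<and> \<zeta> \<le> cos \<theta>) \<or>
      (cos \<theta> \<le> \<xi> \<and> \<xi> < cos \<theta> + sin \<theta> \<and> 0 \<le> \<eta> \<and> \<eta> \<le> 1 / of_int d \<and> 0 \<le> \<zeta> \<and> \<zeta> \<le> sin \<theta>))"

definition Xgen :: "real \<Rightarrow> int \<Rightarrow> real \<times> real \<times> real \<Rightarrow> real \<times> real \<times> real \<Rightarrow> bool" where
  "Xgen \<theta> d p q =
     ((\<exists>\<xi> \<zeta>. p = (\<xi>, 0, \<zeta>) \<and> q = (\<xi>, 1 / of_int d, \<zeta>) \<and> Xbox \<theta> d p \<and> Xbox \<theta> d q) \<or>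
      (\<exists>\<xi> \<eta>. 0 \<le> \<xi> \<and> \<xi> < cos \<theta> \<and> 0 \<le> \<eta> \<and> \<eta> \<le> 1 / of_int d \<and>
              p = (\<xi>, \<eta>, cos \<theta>) \<and> q = (\<xi> + sin \<theta>, \<eta>, 0)) \<or>
      (\<exists>\<xi> \<eta>. cos \<theta> \<le> \<xi> \<and> \<xi> < cos \<theta> + sin \<theta> \<and> 0 \<le> \<eta> \<and> \<eta> \<le> 1 / of_int d \<and>
              p = (\<xi>, \<eta>, sin \<theta>) \<and> q = (\<xi> - cos \<theta>, \<eta>, 0)))"

definition Xeq :: "real \<Rightarrow> int \<Rightarrow> real \<times> real \<times> real \<Rightarrow> real \<times> real \<times> real \<Rightarrow> bool" where
  "Xeq \<theta> d = equivclp (Xgen \<theta> d)"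

text \<open>phi : R^2 \<rightarrow> X, given the increasing enumeration xs of Lambda_F;
  represented by the triple (x_j*, y mod 1/d, x - x_j) with x_j \<le> x < x_{j+1}.\<close>
definition phi :: "real \<Rightarrow> int \<Rightarrow> (int \<Rightarrow> real) \<Rightarrow> real \<times> real \<Rightarrow> real \<times> real \<times> real" where
  "phi \<theta> d xs p = (case p of (x, y) \<Rightarrow>
     (let j = (THE j. xs j \<le> x \<and> x < xs (j + 1)) in
       (star \<theta> (xs j), rmod y (1 / of_int d), x - xs j)))"

text \<open>M = [0, cos+sin) \<times> (R / (1/d)Z), points represented with second coordinate in [0,1/d).\<close>
definition Mset :: "real \<Rightarrow> int \<Rightarrow> (real \<times> real) set" where
  "Mset \<theta> d = {(\<xi>, \<eta>). 0 \<le> \<xi> \<and> \<xi> < cos \<theta> + sin \<theta> \<and> 0 \<le> \<eta> \<and> \<eta> < 1 / of_int d}"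

text \<open>phi(ell_alpha) \<inter> M, with M identified with M \<times> {0} \<subseteq> X.\<close>
definition phiLineM :: "real \<Rightarrow> int \<Rightarrow> (int \<Rightarrow> real) \<Rightarrow> real \<Rightarrow> real \<Rightarrow> (real \<times> real) set" where
  "phiLineM \<theta> d xs lam \<alpha> = {q \<in> Mset \<theta> d. \<exists>t. Xeq \<theta> d (phi \<theta> d xs (t, \<alpha> + t * lam / of_int d)) (fst q, snd q, 0)}"

text \<open>Density of S in L inside M (topology of [0,cos+sin) \<times> R/(1/d)Z).\<close>
definition denseM :: "int \<Rightarrow> (real \<times> real) set \<Rightarrow> (real \<times> real) set \<Rightarrow> bool" where
  "denseM d S L = (S \<subseteq> L \<and> (\<forall>p\<in>L. \<forall>e>0. \<exists>s\<in>S. \<exists>k::int.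
       \<bar>fst s - fst p\<bar> < e \<and> \<bar>snd s - snd p - of_int k / of_int d\<bar> < e))"

end

theory Submission
  imports Defs
begin

(* The proof has three ingredients.
   (1) Arithmetic of the cut-and-project set Lambda_F: for x = m cos - n sin one has
       lambda x + lambda^* x^* = a m + b n, an integer, so every orbit point lies on
       L_alpha; and since tan theta is irrational the star values m sin + n cos are dense
       in R, so the star coordinates x_j^* are dense in [0, cos + sin).
   (2) The enumeration of Lambda_F: consecutive points differ by the height of the
       fibre of X over x_j^* (cos or sin), and every real lies in exactly one cell
       [x_j, x_{j+1}); this makes phi well defined.
   (3) A normal form on the box: it is invariant under the gluing relation of X, so
       phi(t, y) is glued to a point (xi, eta, 0) of M only when t is a lattice point x_j.
   The main theorem combines (3) to identify phi(ell_alpha) \<inter> M with the orbit,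
   and (1) to show the orbit lies in L_alpha and is dense there. *)

lemma rmod_bounds:
  assumes "c > 0" shows "0 \<le> rmod y c" and "rmod y c < c"
proof -
  have "c * of_int \<lfloor>y/c\<rfloor> \<le> c * (y/c)" and "c * (y/c) < c * (of_int \<lfloor>y/c\<rfloor> + 1)"
    using assms by (intro mult_left_mono mult_strict_left_mono; linarith)+
  then show "0 \<le> rmod y c" and "rmod y c < c"
    using assms by (simp_all add: rmod_def algebra_simps)
qed

lemma rmod_shift:
  assumes "c \<noteq> 0" shows "rmod (y + of_int k * c) c = rmod y c"
proof -
  have "\<lfloor>(y + of_int k * c)/c\<rfloor> = \<lfloor>y/c\<rfloor> + k"
    using assms by (simp add: add_divide_distrib)
  then show ?thesis unfolding rmod_def by (simp add: algebra_simps)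
qed

lemma rmod_id:
  assumes "0 \<le> y" and "y < c" shows "rmod y c = y"
proof -
  have "\<lfloor>y/c\<rfloor> = 0" using assms by (simp add: floor_eq_iff)
  then show ?thesis by (simp add: rmod_def)
qed

lemma rmod_diff:
  obtains k :: int where "rmod u c - rmod v c - of_int k * c = u - v"
  by (rule that[of "\<lfloor>v/c\<rfloor> - \<lfloor>u/c\<rfloor>"]) (simp add: rmod_def algebra_simps)

subsection \<open>The star map and the density of its values\<close>

(* Irrationality of tan theta makes (m, n) \<mapsto> m cos - n sin injective,
   so the star map is given by the expected formula. *)
lemma star_eq:
  assumes "cos \<theta> > 0" and "tan \<theta> \<notin> \<rat>"
  shows "star \<theta> (of_int m * cos \<theta> - of_int n * sin \<theta>) = of_int m * sin \<theta> + of_int n * cos \<theta>"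
  unfolding star_def
proof (rule the_equality)
  fix s assume "\<exists>m' n'::int. of_int m * cos \<theta> - of_int n * sin \<theta> = of_int m' * cos \<theta> - of_int n' * sin \<theta>
      \<and> s = of_int m' * sin \<theta> + of_int n' * cos \<theta>"
  then obtain m' n' :: int
    where e: "of_int m * cos \<theta> - of_int n * sin \<theta> = of_int m' * cos \<theta> - of_int n' * sin \<theta>"
      and s: "s = of_int m' * sin \<theta> + of_int n' * cos \<theta>" by blast
  have e': "of_int (m - m') * cos \<theta> = of_int (n - n') * sin \<theta>"
    using e by (simp add: algebra_simps)
  have "n = n'"
  proof (rule ccontr)
    assume "n \<noteq> n'"
    then have "tan \<theta> = of_int (m - m') / of_int (n - n')"
      using e' assms(1) by (simp add: tan_def field_simps)
    then show False using assms(2) by simp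
  qed
  with e' assms(1) have "m = m'" by simp
  with s \<open>n = n'\<close> show "s = of_int m * sin \<theta> + of_int n * cos \<theta>" by simp
qed blast

(* Kronecker: if tan theta is irrational, the values m sin + n cos are dense in R. *)
lemma star_values_dense:
  fixes u \<delta> :: real
  assumes c: "cos \<theta> > 0" and irr: "tan \<theta> \<notin> \<rat>" and \<delta>: "\<delta> > 0"
  shows "\<exists>m n::int. u < of_int m * sin \<theta> + of_int n * cos \<theta> \<and>
                   of_int m * sin \<theta> + of_int n * cos \<theta> < u + \<delta>"
proof -
  have "\<delta> / (2 * cos \<theta>) > 0" using c \<delta> by simp
  then obtain h k :: int
    where hk: "\<bar>of_int k * tan \<theta> - of_int h - (u + \<delta>/2) / cos \<theta>\<bar> < \<delta> / (2 * cos \<theta>)"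
    using sequence_of_fractional_parts_is_dense[OF irr] by metis
  have "of_int k * tan \<theta> - of_int h - (u + \<delta>/2) / cos \<theta>
      = (of_int k * sin \<theta> + of_int (-h) * cos \<theta> - (u + \<delta>/2)) / cos \<theta>"
    using c by (simp add: tan_def field_simps)
  with hk c have "\<bar>of_int k * sin \<theta> + of_int (-h) * cos \<theta> - (u + \<delta>/2)\<bar> / cos \<theta> < \<delta> / (2 * cos \<theta>)"
    by simp
  with c have "\<bar>of_int k * sin \<theta> + of_int (-h) * cos \<theta> - (u + \<delta>/2)\<bar> < \<delta> / 2"
    by (simp add: field_simps)
  then have "u < of_int k * sin \<theta> + of_int (-h) * cos \<theta> \<and> of_int k * sin \<theta> + of_int (-h) * cos \<theta> < u + \<delta>"
    by (simp only: abs_less_iff) linarith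
  then show ?thesis by blast
qed

(* The fundamental identity lambda x + lambda^* x^* = a m + b n \<in> Z: it puts every
   orbit point of the line on the line L_alpha of M. *)
lemma orbit_on_line:
  fixes \<alpha> :: real and a b m n d :: int
  assumes "d > 0"
  shows "rmod (\<alpha> + (of_int a * cos \<theta> - of_int b * sin \<theta>) * (of_int m * cos \<theta> - of_int n * sin \<theta>)
                     / of_int d) (1 / of_int d)
       = rmod (\<alpha> - (of_int a * sin \<theta> + of_int b * cos \<theta>) / of_int d
                     * (of_int m * sin \<theta> + of_int n * cos \<theta>)) (1 / of_int d)"
proof -
  have sc: "sin \<theta> * sin \<theta> = 1 - cos \<theta> * cos \<theta>"
    using sin_cos_squared_add[of \<theta>] by (simp add: power2_eq_square)
  have integral: "(of_int a * cos \<theta> - of_int b * sin \<theta>) * (of_int m * cos \<theta> - of_int n * sin \<theta>)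
      + (of_int a * sin \<theta> + of_int b * cos \<theta>) * (of_int m * sin \<theta> + of_int n * cos \<theta>)
      = of_int a * of_int m + of_int b * of_int n" by (simp add: algebra_simps sc)
  have "\<alpha> + (of_int a * cos \<theta> - of_int b * sin \<theta>) * (of_int m * cos \<theta> - of_int n * sin \<theta>) / of_int d
      = \<alpha> - (of_int a * sin \<theta> + of_int b * cos \<theta>) / of_int d * (of_int m * sin \<theta> + of_int n * cos \<theta>)
        + of_int (a * m + b * n) * (1 / of_int d)"
    using assms by (simp add: field_simps integral[symmetric])
  then show ?thesis by (simp only:) (rule rmod_shift, use assms in simp)
qed

subsection \<open>The cut-and-project set\<close>

(* The height of the fibre of X over xi: cos over [0, cos), sin over [cos, cos + sin).
   It also bounds the gap from a point x of Lambda_F with x^* = xi to its successor. *)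
definition fibre_height :: "real \<Rightarrow> real \<Rightarrow> real" where
  "fibre_height \<theta> \<xi> = (if \<xi> < cos \<theta> then cos \<theta> else sin \<theta>)"

locale cut_project =
  fixes \<theta> :: real
  assumes \<theta>_pos: "0 < \<theta>" and \<theta>_less: "\<theta> < pi / 2" and tan_irrat: "tan \<theta> \<notin> \<rat>"
begin

lemma cos_pos: "cos \<theta> > 0"
  using \<theta>_pos \<theta>_less by (intro cos_gt_zero_pi) auto

lemma sin_pos: "sin \<theta> > 0"
  using \<theta>_pos \<theta>_less by (intro sin_gt_zero) auto

lemma LamF_iff: "x \<in> LamF \<theta> \<longleftrightarrow> (\<exists>m n::int. x = of_int m * cos \<theta> - of_int n * sin \<theta> \<and>
    0 \<le> of_int m * sin \<theta> + of_int n * cos \<theta> \<and> of_int m * sin \<theta> + of_int n * cos \<theta> < cos \<theta> + sin \<theta>)"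
  unfolding LamF_def by blast

lemma LamF_rep:
  assumes "x \<in> LamF \<theta>"
  obtains m n :: int where "x = of_int m * cos \<theta> - of_int n * sin \<theta>"
    and "star \<theta> x = of_int m * sin \<theta> + of_int n * cos \<theta>"
    and "0 \<le> star \<theta> x" and "star \<theta> x < cos \<theta> + sin \<theta>"
  using assms star_eq[OF cos_pos tan_irrat] unfolding LamF_iff by metis

lemma star_LamF_bounds:
  assumes "x \<in> LamF \<theta>" shows "0 \<le> star \<theta> x" and "star \<theta> x < cos \<theta> + sin \<theta>"
  using LamF_rep[OF assms] by metis+

(* Moving up by the fibre height stays in Lambda_F: (m, n) becomes (m+1, n) or (m, n-1). *)
lemma LamF_up:
  assumes "y \<in> LamF \<theta>" shows "y + fibre_height \<theta> (star \<theta> y) \<in> LamF \<theta>"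
proof -
  obtain m n :: int where r: "y = of_int m * cos \<theta> - of_int n * sin \<theta>"
    "star \<theta> y = of_int m * sin \<theta> + of_int n * cos \<theta>"
    "0 \<le> star \<theta> y" "star \<theta> y < cos \<theta> + sin \<theta>"
    using LamF_rep[OF assms] by metis
  show ?thesis
  proof (cases "star \<theta> y < cos \<theta>")
    case True
    have "y + cos \<theta> \<in> LamF \<theta>" unfolding LamF_iff
      by (rule exI[of _ "m + 1"], rule exI[of _ n]) (use r True sin_pos in \<open>auto simp: algebra_simps\<close>)
    then show ?thesis using True by (simp add: fibre_height_def)
  next
    case False
    have "y + sin \<theta> \<in> LamF \<theta>" unfolding LamF_iff
      by (rule exI[of _ m], rule exI[of _ "n - 1"]) (use r False cos_pos in \<open>auto simp: algebra_simps\<close>)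
    then show ?thesis using False by (simp add: fibre_height_def)
  qed
qed

lemma LamF_down:
  assumes "y \<in> LamF \<theta>" shows "\<exists>z\<in>LamF \<theta>. z \<le> y - min (cos \<theta>) (sin \<theta>)"
proof -
  obtain m n :: int where r: "y = of_int m * cos \<theta> - of_int n * sin \<theta>"
    "star \<theta> y = of_int m * sin \<theta> + of_int n * cos \<theta>"
    "0 \<le> star \<theta> y" "star \<theta> y < cos \<theta> + sin \<theta>"
    using LamF_rep[OF assms] by metis
  show ?thesis
  proof (cases "star \<theta> y < sin \<theta>")
    case True
    have "y - sin \<theta> \<in> LamF \<theta>" unfolding LamF_iff
      by (rule exI[of _ m], rule exI[of _ "n + 1"]) (use r True cos_pos in \<open>auto simp: algebra_simps\<close>)
    then show ?thesis by (intro bexI[of _ "y - sin \<theta>"]) auto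
  next
    case False
    have "y - cos \<theta> \<in> LamF \<theta>" unfolding LamF_iff
      by (rule exI[of _ "m - 1"], rule exI[of _ n]) (use r False sin_pos in \<open>auto simp: algebra_simps\<close>)
    then show ?thesis by (intro bexI[of _ "y - cos \<theta>"]) auto
  qed
qed

lemma zero_in_LamF: "0 \<in> LamF \<theta>"
  unfolding LamF_iff using cos_pos sin_pos by (intro exI[of _ 0]) auto

(* Lambda_F is unbounded in both directions, since each step moves by at least min cos sin. *)
lemma LamF_unbounded: "\<exists>y\<in>LamF \<theta>. t \<le> y" "\<exists>y\<in>LamF \<theta>. y \<le> t"
proof -
  define \<mu> where "\<mu> = min (cos \<theta>) (sin \<theta>)"
  have \<mu>: "\<mu> > 0" using cos_pos sin_pos unfolding \<mu>_def by simp
  have reach: "(\<exists>y\<in>LamF \<theta>. real N * \<mu> \<le> y) \<and> (\<exists>y\<in>LamF \<theta>. y \<le> - real N * \<mu>)" for N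
  proof (induction N)
    case 0
    then show ?case using zero_in_LamF by auto
  next
    case (Suc N)
    then obtain y1 y2 where y: "y1 \<in> LamF \<theta>" "real N * \<mu> \<le> y1" "y2 \<in> LamF \<theta>" "y2 \<le> - real N * \<mu>"
      by blast
    have "\<mu> \<le> fibre_height \<theta> (star \<theta> y1)" unfolding \<mu>_def fibre_height_def by simp
    then have "real (Suc N) * \<mu> \<le> y1 + fibre_height \<theta> (star \<theta> y1)"
      using y(2) by (simp add: algebra_simps)
    moreover obtain z where "z \<in> LamF \<theta>" "z \<le> y2 - \<mu>" using LamF_down[OF y(3)] \<mu>_def by blast
    moreover have "y2 - \<mu> \<le> - real (Suc N) * \<mu>" using y(4) by (simp add: algebra_simps)
    ultimately show ?case using LamF_up[OF y(1)] by (meson order_trans)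
  qed
  obtain N :: nat where N: "\<bar>t\<bar> < real N * \<mu>" using reals_Archimedean3[OF \<mu>] by blast
  then have "- (real N * \<mu>) < t" "t < real N * \<mu>" by (simp_all add: abs_less_iff)
  moreover obtain y1 y2 where "y1 \<in> LamF \<theta>" "real N * \<mu> \<le> y1" "y2 \<in> LamF \<theta>" "y2 \<le> - real N * \<mu>"
    using reach[of N] by blast
  ultimately show "\<exists>y\<in>LamF \<theta>. t \<le> y" "\<exists>y\<in>LamF \<theta>. y \<le> t"
    by (intro bexI; simp)+
qed

end

lemma strict_mono_cell_exists:
  fixes xs :: "int \<Rightarrow> 'a::linorder"
  assumes sm: "strict_mono xs" and "xs i \<le> t" and "t < xs k"
  shows "\<exists>j. xs j \<le> t \<and> t < xs (j + 1)"
proof -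
  define S where "S = {j \<in> {i..k}. xs j \<le> t}"
  have fin: "finite S" unfolding S_def by (rule finite_subset[of _ "{i..k}"]) auto
  have "xs i < xs k" using assms(2,3) by simp
  then have "i \<le> k" using sm by (simp add: strict_mono_less)
  then have "i \<in> S" using assms(2) unfolding S_def by simp
  define j where "j = Max S"
  have "j \<in> S" using fin \<open>i \<in> S\<close> unfolding j_def by (intro Max_in) auto
  then have jt: "xs j \<le> t" unfolding S_def by simp
  then have "xs j < xs k" using \<open>t < xs k\<close> by simp
  then have "j + 1 \<le> k" using sm by (simp add: strict_mono_less)
  have "t < xs (j + 1)"
  proof (rule ccontr)
    assume "\<not> t < xs (j + 1)"
    then have "j + 1 \<in> S" using \<open>j \<in> S\<close> \<open>j + 1 \<le> k\<close> unfolding S_def by auto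
    then show False using Max_ge[OF fin] unfolding j_def by fastforce
  qed
  with jt show ?thesis by blast
qed

(* The cell containing a point is unique, so the definite description in phi is determined. *)
lemma strict_mono_cell_the:
  fixes xs :: "int \<Rightarrow> 'a::linorder"
  assumes sm: "strict_mono xs" and "xs i \<le> t" and "t < xs (i + 1)"
  shows "(THE j. xs j \<le> t \<and> t < xs (j + 1)) = i"
proof (rule the_equality)
  fix j assume j: "xs j \<le> t \<and> t < xs (j + 1)"
  have "xs j < xs (i + 1)" and "xs i < xs (j + 1)" using j assms(2,3) by auto
  then have "j < i + 1" and "i < j + 1" using sm by (simp_all add: strict_mono_less)
  then show "j = i" by linarith
qed (use assms in simp)

locale enumeration = cut_project +
  fixes xs :: "int \<Rightarrow> real"
  assumes xs_mono: "strict_mono xs" and xs_range: "range xs = LamF \<theta>"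
begin

lemma xs_in: "xs j \<in> LamF \<theta>"
  using xs_range by auto

lemma xs_gap: "xs (j + 1) \<le> xs j + fibre_height \<theta> (star \<theta> (xs j))"
proof -
  obtain k where k: "xs k = xs j + fibre_height \<theta> (star \<theta> (xs j))"
    using LamF_up[OF xs_in] xs_range by (metis rangeE)
  have "xs j < xs k" using k cos_pos sin_pos by (simp add: fibre_height_def)
  then have "j + 1 \<le> k" using xs_mono by (simp add: strict_mono_less)
  then have "xs (j + 1) \<le> xs k" using xs_mono by (simp add: strict_mono_less_eq)
  then show ?thesis using k by simp
qed

lemma cell_exists: "\<exists>j. xs j \<le> t \<and> t < xs (j + 1)"
proof -
  obtain y1 y2 where y: "y1 \<in> LamF \<theta>" "t + 1 \<le> y1" "y2 \<in> LamF \<theta>" "y2 \<le> t"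
    using LamF_unbounded by blast
  obtain i k where "xs i = y2" and "xs k = y1" using y(1,3) xs_range by (metis rangeE)
  then show ?thesis using strict_mono_cell_exists[OF xs_mono, of i t k] y by simp
qed

lemma phi_cell:
  assumes "xs j \<le> x" and "x < xs (j + 1)"
  shows "phi \<theta> d xs (x, y) = (star \<theta> (xs j), rmod y (1 / of_int d), x - xs j)"
  using strict_mono_cell_the[OF xs_mono assms] by (simp add: phi_def)

end

subsection \<open>A normal form for points of X\<close>

(* Normal form of a box point: a point on the top face of a fibre is moved to the bottom
   face of the fibre it is glued to, and the circle coordinate is reduced mod 1/d.
   (The components are reordered as (xi, zeta, eta).) *)
definition Xnormal :: "real \<Rightarrow> int \<Rightarrow> real \<times> real \<times> real \<Rightarrow> real \<times> real \<times> real" where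
  "Xnormal \<theta> d p = (case p of (\<xi>, \<eta>, \<zeta>) \<Rightarrow>
     if \<zeta> = cos \<theta> \<and> \<xi> < cos \<theta> then (\<xi> + sin \<theta>, 0, rmod \<eta> (1 / of_int d))
     else if \<zeta> = sin \<theta> \<and> cos \<theta> \<le> \<xi> then (\<xi> - cos \<theta>, 0, rmod \<eta> (1 / of_int d))
     else (\<xi>, \<zeta>, rmod \<eta> (1 / of_int d)))"

lemma equivclp_invariant:
  assumes "\<And>x y. r x y \<Longrightarrow> f x = f y" and "equivclp r a b"
  shows "f a = f b"
  using assms(2) by (induction rule: equivclp_induct) (auto dest: assms(1))

lemma Xnormal_Xeq:
  assumes "cos \<theta> > 0" and "sin \<theta> > 0" and "d > 0" and "Xeq \<theta> d p q"
  shows "Xnormal \<theta> d p = Xnormal \<theta> d q"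
proof -
  have "rmod (1 / of_int d) (1 / of_int d) = rmod 0 (1 / of_int d)"
    using rmod_shift[of "1 / of_int d" 0 1] assms(3) by simp
  then have "Xnormal \<theta> d x = Xnormal \<theta> d y" if "Xgen \<theta> d x y" for x y
    using that assms(1,2) unfolding Xgen_def Xnormal_def by auto
  then show ?thesis using equivclp_invariant assms(4) unfolding Xeq_def by metis
qed

lemma Xnormal_fibre:
  assumes "cos \<theta> > 0" and "sin \<theta> > 0" and "0 \<le> \<zeta>" and "\<zeta> < fibre_height \<theta> \<xi>"
  shows "Xnormal \<theta> d (\<xi>, \<eta>, \<zeta>) = (\<xi>, \<zeta>, rmod \<eta> (1 / of_int d))"
  using assms by (auto simp: Xnormal_def fibre_height_def split: if_splits)

subsection \<open>The image of the line and its density\<close>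

context enumeration
begin

(* phi(t, y) is glued to a point of M only if t is a lattice point x_j; hence the
   image of any line of slope lam / d meets M exactly in its orbit points. *)
lemma phiLineM_eq:
  assumes d: "d > 0"
  shows "phiLineM \<theta> d xs lam \<alpha> = {(star \<theta> (xs j), rmod (\<alpha> + lam * xs j / of_int d) (1 / of_int d)) | j. True}"
    (is "_ = ?S")
proof (intro equalityI subsetI)
  have dpos: "(1 / of_int d :: real) > 0" using d by simp
  fix q assume q: "q \<in> phiLineM \<theta> d xs lam \<alpha>"
  then obtain t where X: "Xeq \<theta> d (phi \<theta> d xs (t, \<alpha> + t * lam / of_int d)) (fst q, snd q, 0)"
    and qM: "0 \<le> snd q" "snd q < 1 / of_int d"
    by (auto simp: phiLineM_def Mset_def)
  obtain j where j: "xs j \<le> t" "t < xs (j + 1)" using cell_exists by blast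
  define \<eta> where "\<eta> = rmod (\<alpha> + t * lam / of_int d) (1 / of_int d)"
  (* Compare normal forms: phi(t, y) lies inside the fibre over x_j^* at height t - x_j. *)
  have "(star \<theta> (xs j), t - xs j, rmod \<eta> (1 / of_int d)) = Xnormal \<theta> d (star \<theta> (xs j), \<eta>, t - xs j)"
    by (rule Xnormal_fibre[OF cos_pos sin_pos, symmetric]) (use j xs_gap[of j] in simp_all)
  also have "\<dots> = Xnormal \<theta> d (fst q, snd q, 0)"
    using Xnormal_Xeq[OF cos_pos sin_pos d X] phi_cell[OF j] unfolding \<eta>_def by simp
  also have "\<dots> = (fst q, 0, rmod (snd q) (1 / of_int d))"
    by (rule Xnormal_fibre[OF cos_pos sin_pos]) (use cos_pos sin_pos in \<open>simp_all add: fibre_height_def\<close>)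
  finally have "t = xs j" "fst q = star \<theta> (xs j)" "snd q = \<eta>"
    using rmod_id[OF qM] rmod_id[OF rmod_bounds[OF dpos]] unfolding \<eta>_def by auto
  then show "q \<in> ?S" unfolding \<eta>_def by (auto simp: prod_eq_iff mult.commute)
next
  fix q assume "q \<in> ?S"
  then obtain j where q: "q = (star \<theta> (xs j), rmod (\<alpha> + lam * xs j / of_int d) (1 / of_int d))"
    by blast
  have "q \<in> Mset \<theta> d"
    using q star_LamF_bounds[OF xs_in] rmod_bounds[of "1 / of_int d"] d by (simp add: Mset_def)
  moreover have "phi \<theta> d xs (xs j, \<alpha> + xs j * lam / of_int d) = (fst q, snd q, 0)"
    using phi_cell[of j "xs j"] xs_mono q by (simp add: strict_mono_less mult.commute)
  ultimately show "q \<in> phiLineM \<theta> d xs lam \<alpha>"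
    unfolding phiLineM_def Xeq_def by (metis (mono_tags, lifting) equivclp_refl mem_Collect_eq)
qed

lemma orbit_point_on_L:
  assumes "d > 0"
  shows "rmod (\<alpha> + (of_int a * cos \<theta> - of_int b * sin \<theta>) * xs j / of_int d) (1 / of_int d)
       = rmod (\<alpha> - (of_int a * sin \<theta> + of_int b * cos \<theta>) / of_int d * star \<theta> (xs j)) (1 / of_int d)"
proof -
  obtain m n :: int where "xs j = of_int m * cos \<theta> - of_int n * sin \<theta>"
    and "star \<theta> (xs j) = of_int m * sin \<theta> + of_int n * cos \<theta>"
    using LamF_rep[OF xs_in] by metis
  then show ?thesis using orbit_on_line[OF assms] by simp
qed

(* Density: above any abscissa xi of [0, cos + sin) there are star values x_j^* arbitrarily
   close to the right; the corresponding orbit points approach the point of L_alpha over xi. *)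
lemma orbit_dense:
  assumes d: "d > 0" and xi: "0 \<le> \<xi>" "\<xi> < cos \<theta> + sin \<theta>" and e: "e > 0"
  shows "\<exists>j. \<exists>k::int. \<bar>star \<theta> (xs j) - \<xi>\<bar> < e \<and>
           \<bar>rmod (\<alpha> - s / of_int d * star \<theta> (xs j)) (1 / of_int d)
              - rmod (\<alpha> - s / of_int d * \<xi>) (1 / of_int d) - of_int k / of_int d\<bar> < e"
proof -
  define A where "A = \<bar>s\<bar> / of_int d"
  have A: "A \<ge> 0" unfolding A_def using d by simp
  define \<delta> where "\<delta> = min (cos \<theta> + sin \<theta> - \<xi>) (e / (1 + A))"
  have "\<delta> > 0" unfolding \<delta>_def using xi e A by simp
  then obtain m n :: int where mn: "\<xi> < of_int m * sin \<theta> + of_int n * cos \<theta>"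
      "of_int m * sin \<theta> + of_int n * cos \<theta> < \<xi> + \<delta>"
    using star_values_dense[OF cos_pos tan_irrat] by blast
  define \<sigma> where "\<sigma> = of_int m * sin \<theta> + of_int n * cos \<theta>"
  have "of_int m * cos \<theta> - of_int n * sin \<theta> \<in> LamF \<theta>"
    unfolding LamF_iff using mn xi unfolding \<delta>_def by force
  then obtain j where j: "xs j = of_int m * cos \<theta> - of_int n * sin \<theta>"
    using xs_range by (metis rangeE)
  have sj: "star \<theta> (xs j) = \<sigma>" unfolding j \<sigma>_def by (rule star_eq[OF cos_pos tan_irrat])
  have "\<sigma> - \<xi> < e / (1 + A)" using mn unfolding \<sigma>_def \<delta>_def by simp
  then have gap: "0 < \<sigma> - \<xi>" "(1 + A) * (\<sigma> - \<xi>) < e"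
    using mn A unfolding \<sigma>_def by (simp_all add: field_simps)
  obtain k :: int where k: "rmod (\<alpha> - s / of_int d * \<sigma>) (1 / of_int d) - rmod (\<alpha> - s / of_int d * \<xi>) (1 / of_int d)
          - of_int k * (1 / of_int d) = (\<alpha> - s / of_int d * \<sigma>) - (\<alpha> - s / of_int d * \<xi>)"
    by (rule rmod_diff)
  have "rmod (\<alpha> - s / of_int d * \<sigma>) (1 / of_int d) - rmod (\<alpha> - s / of_int d * \<xi>) (1 / of_int d)
          - of_int k / of_int d = (\<alpha> - s / of_int d * \<sigma>) - (\<alpha> - s / of_int d * \<xi>)"
    using k by simp
  also have "\<dots> = - (s / of_int d) * (\<sigma> - \<xi>)"
    using d by (simp add: field_simps)
  finally have "rmod (\<alpha> - s / of_int d * \<sigma>) (1 / of_int d) - rmod (\<alpha> - s / of_int d * \<xi>) (1 / of_int d)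
          - of_int k / of_int d = - (s / of_int d) * (\<sigma> - \<xi>)" .
  moreover have "\<bar>- (s / of_int d) * (\<sigma> - \<xi>)\<bar> = A * (\<sigma> - \<xi>)"
    unfolding A_def using gap(1) d by (simp add: abs_mult)
  moreover have "A * (\<sigma> - \<xi>) < e" "\<sigma> - \<xi> < e"
    using gap mult_nonneg_nonneg[OF A, of "\<sigma> - \<xi>"] by (simp_all add: algebra_simps)
  ultimately show ?thesis using sj gap(1) by - (rule exI[of _ j], rule exI[of _ k], simp)
qed

lemma orbit_dense_in_line:
  fixes a b d :: int and \<alpha> :: real
  assumes d: "d > 0"
  defines "lam \<equiv> of_int a * cos \<theta> - of_int b * sin \<theta>"
    and "lamS \<equiv> of_int a * sin \<theta> + of_int b * cos \<theta>"
  shows "denseM d {(star \<theta> (xs j), rmod (\<alpha> + lam * xs j / of_int d) (1 / of_int d)) | j. True}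
           {(\<xi>, rmod (\<alpha> - lamS / of_int d * \<xi>) (1 / of_int d)) | \<xi>. 0 \<le> \<xi> \<and> \<xi> < cos \<theta> + sin \<theta>}"
proof -
  have orbit: "rmod (\<alpha> + lam * xs j / of_int d) (1 / of_int d)
      = rmod (\<alpha> - lamS / of_int d * star \<theta> (xs j)) (1 / of_int d)" for j
    unfolding lam_def lamS_def by (rule orbit_point_on_L[OF d])
  show ?thesis
    unfolding denseM_def orbit
  proof (intro conjI ballI allI impI)
    show "{(star \<theta> (xs j), rmod (\<alpha> - lamS / of_int d * star \<theta> (xs j)) (1 / of_int d)) | j. True}
        \<subseteq> {(\<xi>, rmod (\<alpha> - lamS / of_int d * \<xi>) (1 / of_int d)) | \<xi>. 0 \<le> \<xi> \<and> \<xi> < cos \<theta> + sin \<theta>}"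
      using star_LamF_bounds[OF xs_in] by blast
  next
    fix p and e :: real
    assume "p \<in> {(\<xi>, rmod (\<alpha> - lamS / of_int d * \<xi>) (1 / of_int d)) | \<xi>. 0 \<le> \<xi> \<and> \<xi> < cos \<theta> + sin \<theta>}"
      and e: "e > 0"
    then obtain \<xi> where p: "p = (\<xi>, rmod (\<alpha> - lamS / of_int d * \<xi>) (1 / of_int d))"
      and xi: "0 \<le> \<xi>" "\<xi> < cos \<theta> + sin \<theta>" by blast
    obtain j and k :: int where "\<bar>star \<theta> (xs j) - \<xi>\<bar> < e"
      "\<bar>rmod (\<alpha> - lamS / of_int d * star \<theta> (xs j)) (1 / of_int d)
          - rmod (\<alpha> - lamS / of_int d * \<xi>) (1 / of_int d) - of_int k / of_int d\<bar> < e"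
      using orbit_dense[OF d xi e] by blast
    then show "\<exists>s\<in>{(star \<theta> (xs j), rmod (\<alpha> - lamS / of_int d * star \<theta> (xs j)) (1 / of_int d)) | j. True}.
        \<exists>k::int. \<bar>fst s - fst p\<bar> < e \<and> \<bar>snd s - snd p - of_int k / of_int d\<bar> < e"
      unfolding p by auto
  qed
qed

end

theorem mainTheorem5:
  fixes \<theta> \<alpha> :: real and a b d :: int and xs :: "int \<Rightarrow> real"
  assumes "0 < \<theta>" and "\<theta> < pi / 2"
    and "tan \<theta> \<notin> \<rat>"
    and "strict_mono xs" and "range xs = LamF \<theta>" and "xs 0 = 0"
    and "gcd a (gcd b d) = 1" and "d > 0"
  shows "let lam = of_int a * cos \<theta> - of_int b * sin \<theta>;
             lamS = of_int a * sin \<theta> + of_int b * cos \<theta>;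
             L = {(\<xi>, rmod (\<alpha> - lamS / of_int d * \<xi>) (1 / of_int d)) | \<xi>.
                    0 \<le> \<xi> \<and> \<xi> < cos \<theta> + sin \<theta>}
         in phiLineM \<theta> d xs lam \<alpha> =
              {(star \<theta> (xs j), rmod (\<alpha> + lam * xs j / of_int d) (1 / of_int d)) | j. True}
            \<and> denseM d (phiLineM \<theta> d xs lam \<alpha>) L"
proof -
  interpret enumeration \<theta> xs
    using assms(1-5) by unfold_locales
  show ?thesis
    unfolding Let_def phiLineM_eq[OF assms(8)] using orbit_dense_in_line[OF assms(8), where a = a and b = b and \<alpha> = \<alpha>]
    by (simp only: simp_thms)
qed

end
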